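(* Let $\mathbf A$ be a real $n\times n$ matrix. Then $\mathbf A$ is eventually strictly $J$-sign-symmetric (ESJS) if and only if $\mathbf A=\mathbf D\widetilde{\mathbf A}\mathbf D^{-1}$ for some nonsingular real diagonal matrix $\mathbf D$ and some eventually positive matrix $\widetilde{\mathbf A}$.
   Context: For $J\subseteq[n]=\{1,\dots,n\}$ with $J^c=[n]\setminus J$, a real matrix $\mathbf B=\{b_{ij}\}$ is strictly $J$-sign-symmetric if $b_{ij}>0$ for $(i,j)\in (J\times J)\cup(J^c\times J^c)$ and $b_{ij}<0$ for $(i,j)\in(J\times J^c)\cup(J^c\times J)$; $\mathbf B$ is called SJS if it is strictly $J$-sign-symmetric for some $J\subseteq[n]$. A real matrix $\mathbf A$ is ESJS if there is a positive integer $k_0$ such that $\mathbf A^k$ is SJS for all $k\ge k_0$. A real matrix $\widetilde{\mathbf A}$ is eventually positive if there is a positive integer $k_0$ such that $\widetilde{\mathbf A}^k$ has all entries positive for all $k\ge k_0$. *)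

theory Defs
  imports "HOL-Analysis.Analysis"
begin

definition mpow :: "real^'n^'n \<Rightarrow> nat \<Rightarrow> real^'n^'n" where
  "mpow A k = ((\<lambda>X. A ** X) ^^ k) (mat 1)"

definition strictly_J_sign_symmetric :: "'n set \<Rightarrow> real^'n^'n \<Rightarrow> bool" where
  "strictly_J_sign_symmetric J B \<longleftrightarrow>
     (\<forall>i j. ((i \<in> J \<longleftrightarrow> j \<in> J) \<longrightarrow> B $ i $ j > 0) \<and>
            ((i \<in> J \<longleftrightarrow> j \<notin> J) \<longrightarrow> B $ i $ j < 0))"

definition SJS :: "real^'n^'n \<Rightarrow> bool" where
  "SJS B \<longleftrightarrow> (\<exists>J. strictly_J_sign_symmetric J B)"

definition ESJS :: "real^'n^'n \<Rightarrow> bool" where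
  "ESJS A \<longleftrightarrow> (\<exists>k0>0. \<forall>k\<ge>k0. SJS (mpow A k))"

definition eventually_positive :: "real^'n^'n \<Rightarrow> bool" where
  "eventually_positive A \<longleftrightarrow> (\<exists>k0>0. \<forall>k\<ge>k0. \<forall>i j. mpow A k $ i $ j > 0)"

definition diag_mat :: "('n \<Rightarrow> real) \<Rightarrow> real^'n^'n" where
  "diag_mat d = (\<chi> i j. if i = j then d i else 0)"

end

theory Submission
  imports Defs
begin

text \<open>Writing \<open>s\<^sub>J\<close> for the \<open>\<plusminus>1\<close> sign vector of \<open>J\<close>, a matrix \<open>B\<close> is strictly
  \<open>J\<close>-sign-symmetric exactly when \<open>diag s\<^sub>J B diag s\<^sub>J\<close> is entrywise positive, and
  \<open>diag s\<^sub>J\<close> is an involution. Hence the theorem reduces to the observation that the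
  index set \<open>J\<close> can be chosen independently of \<open>k\<close>: if \<open>A\<^sup>k\<close> is \<open>J\<close>-SJS and \<open>A\<^sup>l\<close>
  is \<open>K\<close>-SJS, then \<open>A\<^sup>k\<^sup>l\<close> is both \<open>J\<close>- and \<open>K\<close>-SJS (powers of a positive matrix stay
  positive), which forces \<open>J\<close> and \<open>K\<close> to induce the same sign pattern. Conversely, a
  diagonal similarity \<open>D P D\<^sup>-\<^sup>1\<close> of a positive \<open>P\<close> is SJS for \<open>J = {i. d\<^sub>i > 0}\<close>.\<close>

lemma matrix_inv_eqI:
  fixes A B :: "'a::semiring_1^'n^'n"
  assumes "A ** B = mat 1" "B ** A = mat 1"
  shows "matrix_inv A = B"
proof -
  have inv: "A ** matrix_inv A = mat 1 \<and> matrix_inv A ** A = mat 1"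
    unfolding matrix_inv_def by (rule someI[of _ B]) (use assms in blast)
  have "matrix_inv A = matrix_inv A ** (A ** B)" using assms(1) by simp
  also have "\<dots> = B" using inv by (simp add: matrix_mul_assoc)
  finally show ?thesis .
qed

lemma diag_mat_mult_left: "(diag_mat d ** B) $ i $ j = d i * B $ i $ j"
proof -
  have "(diag_mat d ** B) $ i $ j = (\<Sum>k\<in>UNIV. if k = i then d i * B $ i $ j else 0)"
    unfolding matrix_matrix_mult_def diag_mat_def by (simp only: vec_lambda_beta, rule sum.cong, auto)
  then show ?thesis by simp
qed

lemma diag_mat_mult_right: "(B ** diag_mat d) $ i $ j = B $ i $ j * d j"
proof -
  have "(B ** diag_mat d) $ i $ j = (\<Sum>k\<in>UNIV. if k = j then B $ i $ j * d j else 0)"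
    unfolding matrix_matrix_mult_def diag_mat_def by (simp only: vec_lambda_beta, rule sum.cong, auto)
  then show ?thesis by simp
qed

lemma diag_mat_similarity_nth: "(diag_mat d ** B ** diag_mat e) $ i $ j = d i * B $ i $ j * e j"
  by (simp add: diag_mat_mult_left diag_mat_mult_right)

lemma diag_mat_mult_diag_mat: "diag_mat d ** diag_mat e = diag_mat (\<lambda>i. d i * e i)"
  by (simp add: vec_eq_iff diag_mat_mult_right) (simp add: diag_mat_def)

lemma diag_mat_mult_inverse:
  assumes "\<forall>i. d i \<noteq> 0"
  shows "diag_mat d ** diag_mat (\<lambda>i. inverse (d i)) = mat 1"
    and "diag_mat (\<lambda>i. inverse (d i)) ** diag_mat d = mat 1"
  using assms by (simp_all add: diag_mat_mult_diag_mat) (simp_all add: diag_mat_def mat_def vec_eq_iff)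

lemma matrix_inv_diag_mat:
  assumes "\<forall>i. d i \<noteq> 0"
  shows "matrix_inv (diag_mat d) = diag_mat (\<lambda>i. inverse (d i))"
  using diag_mat_mult_inverse[OF assms] by (rule matrix_inv_eqI)

lemma mpow_0 [simp]: "mpow A 0 = mat 1"
  by (simp add: mpow_def)

lemma mpow_Suc: "mpow A (Suc k) = A ** mpow A k"
  by (simp add: mpow_def)

lemma mpow_add: "mpow A (a + b) = mpow A a ** mpow A b"
  by (induction a) (simp_all add: mpow_Suc matrix_mul_assoc)

lemma mpow_mult: "mpow A (a * b) = mpow (mpow A a) b"
  by (induction b) (simp_all add: mpow_Suc mpow_add)

lemma mpow_similarity:
  assumes "E ** D = mat 1" "D ** E = mat 1"
  shows "mpow (D ** B ** E) k = D ** mpow B k ** E"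
proof (induction k)
  case 0
  then show ?case using assms(2) by simp
next
  case (Suc k)
  have "mpow (D ** B ** E) (Suc k) = D ** B ** (E ** D) ** mpow B k ** E"
    using Suc by (simp add: mpow_Suc matrix_mul_assoc)
  then show ?case using assms(1) by (simp add: mpow_Suc matrix_mul_assoc)
qed

definition positive_matrix :: "real^'n^'n \<Rightarrow> bool" where
  "positive_matrix P \<longleftrightarrow> (\<forall>i j. P $ i $ j > 0)"

lemma positive_matrix_mult:
  assumes "positive_matrix P" "positive_matrix Q"
  shows "positive_matrix (P ** Q)"
  using assms unfolding positive_matrix_def matrix_matrix_mult_def
  by (simp, intro allI sum_pos) auto

lemma positive_matrix_mpow:
  assumes "positive_matrix P" "m > 0"
  shows "positive_matrix (mpow P m)"
  using assms(2)
proof (induction m)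
  case (Suc m)
  then show ?case
    by (cases "m = 0") (simp_all add: mpow_Suc assms(1) positive_matrix_mult)
qed simp

lemma eventually_positive_iff:
  "eventually_positive A \<longleftrightarrow> (\<exists>k0>0. \<forall>k\<ge>k0. positive_matrix (mpow A k))"
  by (simp add: eventually_positive_def positive_matrix_def)

definition sign_vec :: "'n set \<Rightarrow> 'n \<Rightarrow> real" where
  "sign_vec J i = (if i \<in> J then 1 else -1)"

lemma diag_mat_sign_vec_involutive: "diag_mat (sign_vec J) ** diag_mat (sign_vec J) = mat 1"
  by (simp add: diag_mat_mult_diag_mat sign_vec_def) (simp add: diag_mat_def mat_def vec_eq_iff)

lemma strictly_J_sign_symmetric_iff:
  "strictly_J_sign_symmetric J B \<longleftrightarrow> (\<forall>i j. sign_vec J i * B $ i $ j * sign_vec J j > 0)"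
  unfolding strictly_J_sign_symmetric_def sign_vec_def by (auto simp: mult_less_0_iff)

lemma strictly_J_sign_symmetric_iff_positive:
  "strictly_J_sign_symmetric J B \<longleftrightarrow>
     positive_matrix (diag_mat (sign_vec J) ** B ** diag_mat (sign_vec J))"
  by (simp add: strictly_J_sign_symmetric_iff positive_matrix_def diag_mat_similarity_nth)

lemma strictly_J_sign_symmetric_mpow:
  assumes "strictly_J_sign_symmetric J B" "m > 0"
  shows "strictly_J_sign_symmetric J (mpow B m)"
proof -
  let ?S = "diag_mat (sign_vec J)"
  have "mpow (?S ** B ** ?S) m = ?S ** mpow B m ** ?S"
    using mpow_similarity diag_mat_sign_vec_involutive by blast
  then show ?thesis
    using positive_matrix_mpow assms by (metis strictly_J_sign_symmetric_iff_positive)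
qed

text \<open>The sign pattern of an SJS matrix determines \<open>s\<^sub>J i * s\<^sub>J j\<close>, so two index sets
  admissible for one matrix are admissible for the same matrices.\<close>

lemma strictly_J_sign_symmetric_transfer:
  assumes "strictly_J_sign_symmetric J B" "strictly_J_sign_symmetric K B"
    and "strictly_J_sign_symmetric K C"
  shows "strictly_J_sign_symmetric J C"
proof -
  have "sign_vec J i * sign_vec J j = sign_vec K i * sign_vec K j" for i j
  proof -
    have "sign_vec J i * B $ i $ j * sign_vec J j > 0" "sign_vec K i * B $ i $ j * sign_vec K j > 0"
      using assms(1,2) unfolding strictly_J_sign_symmetric_iff by blast+
    then show ?thesis
      by (auto simp: sign_vec_def split: if_splits)
  qed
  then show ?thesis
    using assms(3) unfolding strictly_J_sign_symmetric_iff by (metis mult.commute mult.left_commute)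
qed

lemma ESJS_uniform_index_set:
  assumes "ESJS A"
  obtains J k0 where "k0 > 0" "\<forall>k\<ge>k0. strictly_J_sign_symmetric J (mpow A k)"
proof -
  obtain k0 where k0: "k0 > 0" "\<forall>k\<ge>k0. SJS (mpow A k)"
    using assms unfolding ESJS_def by blast
  then obtain J where J: "strictly_J_sign_symmetric J (mpow A k0)"
    unfolding SJS_def by blast
  have "strictly_J_sign_symmetric J (mpow A k)" if k: "k \<ge> k0" for k
  proof -
    obtain K where K: "strictly_J_sign_symmetric K (mpow A k)"
      using k0(2) k unfolding SJS_def by blast
    have "strictly_J_sign_symmetric J (mpow A (k0 * k))"
      using strictly_J_sign_symmetric_mpow[OF J] k k0(1) by (simp add: mpow_mult)
    moreover have "strictly_J_sign_symmetric K (mpow A (k0 * k))"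
      using strictly_J_sign_symmetric_mpow[OF K k0(1)] by (simp add: mpow_mult[symmetric] mult.commute)
    ultimately show ?thesis
      using K by (rule strictly_J_sign_symmetric_transfer)
  qed
  then show ?thesis using that k0(1) by blast
qed

lemma strictly_J_sign_symmetric_diag_similarity:
  assumes "\<forall>i. d i \<noteq> 0" "positive_matrix P"
  shows "strictly_J_sign_symmetric {i. d i > 0} (diag_mat d ** P ** diag_mat (\<lambda>i. inverse (d i)))"
  unfolding strictly_J_sign_symmetric_iff diag_mat_similarity_nth
proof (intro allI)
  fix i j
  let ?s = "sign_vec {i. d i > 0}"
  have "?s i * (d i * P $ i $ j * inverse (d j)) * ?s j = \<bar>d i\<bar> * P $ i $ j * inverse \<bar>d j\<bar>"
    using assms(1) by (auto simp: sign_vec_def)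
  also have "\<dots> > 0"
    using assms unfolding positive_matrix_def by simp
  finally show "?s i * (d i * P $ i $ j * inverse (d j)) * ?s j > 0" .
qed

theorem lemma2:
  fixes A :: "real^'n^'n"
  shows "ESJS A \<longleftrightarrow>
    (\<exists>d At. (\<forall>i. d i \<noteq> 0) \<and> eventually_positive At \<and>
       A = diag_mat d ** At ** matrix_inv (diag_mat d))"
proof
  assume "ESJS A"
  then obtain J k0 where k0: "k0 > 0" "\<forall>k\<ge>k0. strictly_J_sign_symmetric J (mpow A k)"
    by (rule ESJS_uniform_index_set)
  let ?S = "diag_mat (sign_vec J)"
  have S: "?S ** ?S = mat 1" "matrix_inv ?S = ?S" "\<forall>i. sign_vec J i \<noteq> 0"
    using diag_mat_sign_vec_involutive matrix_inv_eqI by (blast, blast, simp add: sign_vec_def)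
  have "A = ?S ** (?S ** A ** ?S) ** matrix_inv ?S"
    using S by (simp add: matrix_mul_assoc) (simp add: matrix_mul_assoc[symmetric])
  moreover have "eventually_positive (?S ** A ** ?S)"
    unfolding eventually_positive_iff mpow_similarity[OF S(1) S(1)]
    using k0 strictly_J_sign_symmetric_iff_positive by blast
  ultimately show "\<exists>d At. (\<forall>i. d i \<noteq> 0) \<and> eventually_positive At \<and>
      A = diag_mat d ** At ** matrix_inv (diag_mat d)"
    using S(3) by blast
next
  assume "\<exists>d At. (\<forall>i. d i \<noteq> 0) \<and> eventually_positive At \<and>
      A = diag_mat d ** At ** matrix_inv (diag_mat d)"
  then obtain d At where d: "\<forall>i. d i \<noteq> 0" and "eventually_positive At"
    and A: "A = diag_mat d ** At ** diag_mat (\<lambda>i. inverse (d i))"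
    using matrix_inv_diag_mat by metis
  then obtain k0 where "k0 > 0" "\<forall>k\<ge>k0. positive_matrix (mpow At k)"
    unfolding eventually_positive_iff by blast
  moreover have "mpow A k = diag_mat d ** mpow At k ** diag_mat (\<lambda>i. inverse (d i))" for k
    unfolding A using diag_mat_mult_inverse(2,1)[OF d] by (rule mpow_similarity)
  ultimately show "ESJS A"
    unfolding ESJS_def SJS_def using strictly_J_sign_symmetric_diag_similarity[OF d] by metis
qed

end
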